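(* Let $k,c$ be integers with $1<c<k$. Then $N(ck+c-k,k)=\gcd(c,k)$.
   Context: For $n>k\ge1$, $N(n,k)$ is the nullity of the $n\times n$ skew-symmetric Toeplitz matrix $A(n,k)$ whose first $k$ superdiagonals have all entries $1$ and whose remaining superdiagonals have all entries $0$. *)

theory Defs
  imports "Jordan_Normal_Form.Matrix_Kernel"
begin

definition toepA :: "nat \<Rightarrow> nat \<Rightarrow> real mat" where
  "toepA n k = mat n n (\<lambda>(i,j).
      if i < j \<and> j - i \<le> k then 1
      else if j < i \<and> i - j \<le> k then -1
      else 0)"

definition nullityN :: "nat \<Rightarrow> nat \<Rightarrow> nat" where
  "nullityN n k = kernel_dim (toepA n k)"

end

(*
  Extend a kernel vector f of A(n,k), n = (c-1)(k+1)+1, by zeros and pass to its lag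
  differences y(m) = f(m) - f(m-k-1). Consecutive rows of A(n,k) differ by
  y(i+k+1) - y(i+1), so the kernel equations say exactly that y(1), y(2), ... run through
  a k-periodic pattern h with zero period sum. Since n = 1 mod k+1, summing y down the
  residue class of n+s gives f(n+s) as a sum of c consecutive values of h; so f vanishes
  from n on iff all c-windows of h vanish, i.e. iff h is also c-periodic, hence
  gcd(c,k)-periodic. Such f are parametrised freely by f(0) = y(0) and the first
  gcd(c,k) - 1 values of h, i.e. by f(0), ..., f(gcd(c,k) - 1). The argument needs only
  c, k >= 1.
*)
theory Submission
  imports Defs
begin

section \<open>Periodic sequences\<close>

lemma periodic_dvd:
  fixes p q :: nat
  assumes "\<And>r. h (r + p) = h r" and "p dvd q"
  shows "h (r + q) = h r"
proof -
  obtain d where "q = p * d" using assms(2) ..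
  moreover have "h (r + p * d) = h r" for d
  proof (induction d)
    case (Suc d)
    then show ?case using assms(1)[of "r + p * d"] by (simp add: ac_simps)
  qed simp
  ultimately show ?thesis by simp
qed

lemma periodic_gcd:
  fixes a b :: nat
  assumes "\<And>r. h (r + a) = h r" and "\<And>r. h (r + b) = h r" and "a \<noteq> 0"
  shows "h (r + gcd a b) = h r"
proof -
  obtain x y where xy: "a * x = b * y + gcd a b" using bezout_nat[OF assms(3)] by blast
  have "h (r + gcd a b) = h (r + gcd a b + b * y)"
    by (rule periodic_dvd[of h b, OF assms(2), symmetric]) simp
  also have "\<dots> = h (r + a * x)" using xy by (simp add: algebra_simps)
  also have "\<dots> = h r" by (rule periodic_dvd[of h a, OF assms(1)]) simp
  finally show ?thesis .
qed

lemma periodic_sum_shift: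
  fixes h :: "nat \<Rightarrow> 'a::cancel_comm_monoid_add"
  assumes "\<And>r. h (r + p) = h r"
  shows "(\<Sum>t<p. h (s + t)) = (\<Sum>t<p. h t)"
proof (induction s)
  case (Suc s)
  have "h s + (\<Sum>t<p. h (Suc s + t)) = (\<Sum>t<Suc p. h (s + t))"
    by (subst sum.lessThan_Suc_shift) simp
  also have "\<dots> = (\<Sum>t<p. h (s + t)) + h (s + p)"
    by simp
  also have "\<dots> = h s + (\<Sum>t<p. h (s + t))"
    using assms[of s] by (simp add: add.commute)
  finally show ?case using Suc by (simp add: add.commute)
qed simp

lemma periodic_sum_mult:
  fixes h :: "nat \<Rightarrow> 'a::ring_1"
  assumes "\<And>r. h (r + p) = h r"
  shows "(\<Sum>t<q * p. h (s + t)) = of_nat q * (\<Sum>t<p. h t)"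
proof -
  have "(\<Sum>t<q * p. h (s + t)) = (\<Sum>i<q. \<Sum>t\<in>{i * p..<i * p + p}. h (s + t))"
    by (rule sum.nat_group[symmetric])
  also have "\<dots> = (\<Sum>i<q. \<Sum>t<p. h (s + i * p + t))"
  proof (rule sum.cong[OF refl])
    fix i
    show "(\<Sum>t\<in>{i * p..<i * p + p}. h (s + t)) = (\<Sum>t<p. h (s + i * p + t))"
      using sum.shift_bounds_nat_ivl[of "\<lambda>t. h (s + t)" 0 "i * p" p]
      by (simp add: lessThan_atLeast0 ac_simps)
  qed
  also have "\<dots> = (\<Sum>i<q. \<Sum>t<p. h t)"
    using periodic_sum_shift[of h p, OF assms] by simp
  finally show ?thesis by simp
qed

lemma periodic_if_window_sums_0:
  fixes h :: "nat \<Rightarrow> 'a::ab_group_add"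
  assumes "\<And>s. (\<Sum>t<c. h (s + t)) = 0"
  shows "h (s + c) = h s"
proof -
  have "h s + (\<Sum>t<c. h (Suc s + t)) = (\<Sum>t<Suc c. h (s + t))"
    by (subst sum.lessThan_Suc_shift) simp
  also have "\<dots> = (\<Sum>t<c. h (s + t)) + h (s + c)"
    by simp
  finally have "h s + (\<Sum>t<c. h (Suc s + t)) = (\<Sum>t<c. h (s + t)) + h (s + c)" .
  then show ?thesis using assms[of s] assms[of "Suc s"] by simp
qed

lemma periodic_below_mod:
  fixes k m N :: nat
  assumes "\<And>m. 1 \<le> m \<Longrightarrow> m < N \<Longrightarrow> y (m + k) = y m" and "1 \<le> m" and "m < N + k"
  shows "y m = y ((m - 1) mod k + 1)"
  using assms(2,3)
proof (induction m rule: less_induct)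
  case (less m)
  show ?case
  proof (cases "m \<le> k \<or> k = 0")
    case True
    then show ?thesis using less.prems by auto
  next
    case False
    then have "y m = y (m - k + k)" by simp
    also have "\<dots> = y (m - k)" using False less.prems by (intro assms(1)) auto
    also have "\<dots> = y ((m - k - 1) mod k + 1)" using False less.prems by (intro less.IH) auto
    also have "m - k - 1 = (m - 1) - k" by simp
    also have "(m - 1 - k) mod k = (m - 1) mod k"
      using False by (auto simp: mod_if)
    finally show ?thesis .
  qed
qed

lemma periodic_eq_0_if_window_sums_0:
  fixes h :: "nat \<Rightarrow> 'a::field_char_0"
  assumes "0 < c" and h_k: "\<And>r. h (r + k) = h r" and windows: "\<And>s. (\<Sum>t<c. h (s + t)) = 0"
    and init: "\<And>r. r < gcd c k - 1 \<Longrightarrow> h r = 0"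
  shows "h r = 0"
proof -
  define g where "g = gcd c k"
  have "0 < g" "g dvd c" using assms(1) unfolding g_def by simp_all
  have h_g: "h (r + g) = h r" for r
    unfolding g_def using assms(1) periodic_if_window_sums_0[of h c, OF windows] h_k
    by (intro periodic_gcd) auto
  have "of_nat (c div g) * (\<Sum>t<g. h t) = (\<Sum>t<c div g * g. h (0 + t))"
    by (rule periodic_sum_mult[symmetric]) (rule h_g)
  also have "\<dots> = 0" using windows[of 0] \<open>g dvd c\<close> by simp
  finally have "(\<Sum>t<g. h t) = 0" using \<open>g dvd c\<close> assms(1) by (auto elim: dvdE)
  moreover have "(\<Sum>t<g. h t) = (\<Sum>t<g - 1. h t) + h (g - 1)"
    using \<open>0 < g\<close> by (metis Suc_pred' sum.lessThan_Suc)
  moreover have "(\<Sum>t<g - 1. h t) = 0"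
    using init unfolding g_def by simp
  ultimately have last: "h (g - 1) = 0" by simp
  have "h r = h (r mod g + g * (r div g))" by simp
  also have "\<dots> = h (r mod g)" by (rule periodic_dvd[of h g, OF h_g]) simp
  also have "\<dots> = 0"
  proof (cases "r mod g < g - 1")
    case True
    then show ?thesis using init unfolding g_def by simp
  next
    case False
    moreover have "r mod g < g" using \<open>0 < g\<close> by simp
    ultimately have "r mod g = g - 1" by linarith
    then show ?thesis using last by simp
  qed
  finally show ?thesis .
qed

section \<open>Lag differences\<close>

definition lag_diff :: "nat \<Rightarrow> (nat \<Rightarrow> 'a::ab_group_add) \<Rightarrow> nat \<Rightarrow> 'a" where
  "lag_diff k f m = f m - (if Suc k \<le> m then f (m - Suc k) else 0)"

fun lag_sum :: "nat \<Rightarrow> (nat \<Rightarrow> 'a::ab_group_add) \<Rightarrow> nat \<Rightarrow> 'a" where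
  "lag_sum k y m = y m + (if Suc k \<le> m then lag_sum k y (m - Suc k) else 0)"

declare lag_sum.simps [simp del]

lemma lag_diff_lag_sum: "lag_diff k (lag_sum k y) = y"
proof
  fix m show "lag_diff k (lag_sum k y) m = y m"
    unfolding lag_diff_def by (subst lag_sum.simps[of k y m]) simp
qed

lemma lag_sum_lag_diff: "lag_sum k (lag_diff k f) = f"
proof
  fix m show "lag_sum k (lag_diff k f) m = f m"
  proof (induction m rule: less_induct)
    case (less m)
    show ?case
    proof (cases "Suc k \<le> m")
      case True
      then have "lag_sum k (lag_diff k f) (m - Suc k) = f (m - Suc k)" by (intro less) simp
      with True show ?thesis by (subst lag_sum.simps) (simp add: lag_diff_def)
    next
      case False
      then show ?thesis by (subst lag_sum.simps) (simp add: lag_diff_def)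
    qed
  qed
qed

lemma lag_sum_mult_add:
  assumes "r < Suc k"
  shows "lag_sum k y (q * Suc k + r) = (\<Sum>t\<le>q. y (t * Suc k + r))"
proof (induction q)
  case 0
  show ?case using assms by (subst lag_sum.simps) simp
next
  case (Suc q)
  then show ?case by (subst lag_sum.simps) (simp add: add.commute add.left_commute)
qed

lemma lag_sum_eq_0:
  assumes "\<And>m. m \<le> j \<Longrightarrow> y m = 0"
  shows "lag_sum k y j = 0"
  using assms
proof (induction j rule: less_induct)
  case (less j)
  have "Suc k \<le> j \<Longrightarrow> lag_sum k y (j - Suc k) = 0" by (rule less.IH) (simp_all add: less.prems)
  then show ?case using less.prems by (subst lag_sum.simps) simp
qed

lemma lag_sum_last_window:
  assumes "0 < c" and "s < k" and h_k: "\<And>r. h (r + k) = h r"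
    and y_h: "\<And>m. 1 \<le> m \<Longrightarrow> m < (c - 1) * Suc k + 1 + k \<Longrightarrow> y m = h (m - 1)"
  shows "lag_sum k y ((c - 1) * Suc k + 1 + s) = (\<Sum>t<c. h (s + t))"
proof -
  have "lag_sum k y ((c - 1) * Suc k + (1 + s)) = (\<Sum>t\<le>c - 1. y (t * Suc k + (1 + s)))"
    by (rule lag_sum_mult_add) (use assms in simp)
  also have "\<dots> = (\<Sum>t<c. y (t * Suc k + (1 + s)))"
    using assms(1) by (simp add: lessThan_Suc_atMost[symmetric])
  also have "\<dots> = (\<Sum>t<c. h (s + t))"
  proof (rule sum.cong[OF refl])
    fix t assume "t \<in> {..<c}"
    then have "t * Suc k \<le> (c - 1) * Suc k" by (intro mult_le_mono1) auto
    then have "y (t * Suc k + (1 + s)) = h ((s + t) + k * t)"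
      using y_h[of "t * Suc k + (1 + s)"] assms(2) by (simp add: algebra_simps)
    also have "\<dots> = h (s + t)" by (rule periodic_dvd[of h k, OF h_k]) simp
    finally show "y (t * Suc k + (1 + s)) = h (s + t)" .
  qed
  finally show ?thesis by (simp add: add.assoc)
qed

section \<open>Null sequences of the banded skew-symmetric Toeplitz operator\<close>

definition toep_row :: "nat \<Rightarrow> (nat \<Rightarrow> 'a::ab_group_add) \<Rightarrow> nat \<Rightarrow> 'a" where
  "toep_row k f i = (\<Sum>j\<in>{Suc i..<Suc i + k}. f j) - (\<Sum>j\<in>{i - k..<i}. f j)"

definition toep_null :: "nat \<Rightarrow> nat \<Rightarrow> (nat \<Rightarrow> 'a::ab_group_add) \<Rightarrow> bool" where
  "toep_null n k f \<longleftrightarrow> (\<forall>j\<ge>n. f j = 0) \<and> (\<forall>i<n. toep_row k f i = 0)"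

lemma toep_row_0: "toep_row k f 0 = (\<Sum>j\<in>{1..k}. lag_diff k f j)"
proof -
  have "toep_row k f 0 = (\<Sum>j\<in>{1..k}. f j)"
    unfolding toep_row_def by (simp add: atLeastLessThanSuc_atLeastAtMost)
  also have "\<dots> = (\<Sum>j\<in>{1..k}. lag_diff k f j)"
    by (intro sum.cong refl) (simp add: lag_diff_def)
  finally show ?thesis .
qed

lemma toep_row_Suc:
  "toep_row k f (Suc i) = toep_row k f i + lag_diff k f (i + Suc k) - lag_diff k f (Suc i)"
proof -
  have right: "(\<Sum>j\<in>{Suc (Suc i)..<Suc (Suc i) + k}. f j)
      = (\<Sum>j\<in>{Suc i..<Suc i + k}. f j) + f (i + Suc k) - f (Suc i)"
  proof (cases k)
    case (Suc k')
    have "(\<Sum>j\<in>{Suc i..<Suc i + k}. f j) = f (Suc i) + (\<Sum>j\<in>{Suc (Suc i)..<Suc i + k}. f j)"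
      by (rule sum.atLeast_Suc_lessThan) (simp add: Suc)
    then show ?thesis using Suc by simp
  qed simp
  have left: "(\<Sum>j\<in>{Suc i - k..<Suc i}. f j)
      = (\<Sum>j\<in>{i - k..<i}. f j) + f i - (if k \<le> i then f (i - k) else 0)"
  proof (cases "k \<le> i")
    case True
    have "(\<Sum>j\<in>{i - k..<Suc i}. f j) = f (i - k) + (\<Sum>j\<in>{Suc (i - k)..<Suc i}. f j)"
      by (rule sum.atLeast_Suc_lessThan) simp
    moreover have "(\<Sum>j\<in>{i - k..<Suc i}. f j) = (\<Sum>j\<in>{i - k..<i}. f j) + f i"
      by (rule sum.atLeastLessThan_Suc) simp
    moreover have "Suc i - k = Suc (i - k)" using True by simp
    ultimately show ?thesis using True by (metis add_diff_cancel_left')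
  qed auto
  show ?thesis
    unfolding toep_row_def lag_diff_def right left by (simp add: algebra_simps)
qed

lemma toep_rows_eq_0_iff:
  assumes "0 < n"
  shows "(\<forall>i<n. toep_row k f i = 0) \<longleftrightarrow>
    (\<Sum>j\<in>{1..k}. lag_diff k f j) = 0 \<and>
    (\<forall>m. 1 \<le> m \<longrightarrow> m < n \<longrightarrow> lag_diff k f (m + k) = lag_diff k f m)"
  (is "?rows \<longleftrightarrow> ?first \<and> ?periodic")
proof
  assume rows: ?rows
  show "?first \<and> ?periodic"
  proof
    show ?first using rows assms toep_row_0[of k f] by simp
    show ?periodic
    proof (intro allI impI)
      fix m assume "1 \<le> m" "m < n"
      then show "lag_diff k f (m + k) = lag_diff k f m"
        using rows toep_row_Suc[of k f "m - 1"] by simp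
    qed
  qed
next
  assume "?first \<and> ?periodic"
  then have first: ?first and periodic: ?periodic by blast+
  show ?rows
  proof (intro allI impI)
    fix i assume "i < n"
    then show "toep_row k f i = 0"
    proof (induction i)
      case 0
      then show ?case using first by (simp add: toep_row_0)
    next
      case (Suc i)
      then show ?case using periodic[rule_format, of "Suc i"] by (simp add: toep_row_Suc)
    qed
  qed
qed

lemma toep_null_eq_0:
  fixes f :: "nat \<Rightarrow> 'a::field_char_0"
  assumes "0 < c" and "0 < k" and null: "toep_null ((c - 1) * Suc k + 1) k f"
    and init: "\<And>p. p < gcd c k \<Longrightarrow> f p = 0"
  shows "f j = 0"
proof -
  define n where "n = (c - 1) * Suc k + 1"
  define y where "y = lag_diff k f"
  define h where "h r = y (r mod k + 1)" for r
  have rows: "y (m + k) = y m" if "1 \<le> m" "m < n" for m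
    using null toep_rows_eq_0_iff[of n k f] that unfolding toep_null_def n_def y_def by auto
  have y_h: "y m = h (m - 1)" if "1 \<le> m" "m < n + k" for m
    using periodic_below_mod[of n y k m, OF rows] that unfolding h_def by auto
  have h_k: "h (r + k) = h r" for r
    unfolding h_def by simp
  have windows: "(\<Sum>t<c. h (s + t)) = 0" for s
  proof -
    have "(\<Sum>t<c. h (s + t)) = (\<Sum>t<c. h (s mod k + t + k * (s div k)))"
      by (simp add: ac_simps)
    also have "\<dots> = (\<Sum>t<c. h (s mod k + t))"
      by (intro sum.cong refl periodic_dvd[of h k, OF h_k]) simp
    also have "\<dots> = lag_sum k y (n + s mod k)"
      using lag_sum_last_window[where h = h and y = y and s = "s mod k", OF assms(1) _ h_k] y_h assms(2)
      unfolding n_def by simp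
    also have "\<dots> = f (n + s mod k)"
      unfolding y_def lag_sum_lag_diff ..
    also have "\<dots> = 0"
      using null unfolding toep_null_def n_def by simp
    finally show ?thesis .
  qed
  have h_0: "h r = 0" for r
  proof (rule periodic_eq_0_if_window_sums_0[OF assms(1) h_k windows])
    fix r assume r: "r < gcd c k - 1"
    moreover have "gcd c k \<le> k" using assms(2) by simp
    ultimately have "r < k" "r + 1 < n + k" unfolding n_def by auto
    then have "h r = y (r + 1)" using y_h[of "r + 1"] by simp
    also have "\<dots> = f (r + 1)" using \<open>r < k\<close> unfolding y_def lag_diff_def by simp
    also have "\<dots> = 0" using init r by simp
    finally show "h r = 0" .
  qed
  have y_0: "y m = 0" if "m < n" for m
    using y_h[of m] h_0 init[of 0] that assms unfolding y_def lag_diff_def by (cases m) auto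
  show ?thesis
  proof (cases "j < n")
    case True
    then have "lag_sum k y j = 0" using y_0 by (intro lag_sum_eq_0) simp
    then show ?thesis unfolding y_def lag_sum_lag_diff .
  next
    case False
    then show ?thesis using null unfolding toep_null_def n_def by simp
  qed
qed

lemma toep_null_truncated_lag_sum:
  fixes h :: "nat \<Rightarrow> 'a::ring_1" and b :: 'a
  assumes "0 < c" and "0 < k" and h_g: "\<And>r. h (r + gcd c k) = h r"
    and h_sum: "(\<Sum>t<gcd c k. h t) = 0"
  defines "n \<equiv> (c - 1) * Suc k + 1" and "y \<equiv> \<lambda>m. if m = 0 then b else h (m - 1)"
  shows "toep_null n k (\<lambda>j. if j < n then lag_sum k y j else 0)"
proof -
  define f where "f j = (if j < n then lag_sum k y j else 0)" for j
  have windows: "(\<Sum>t<q. h (s + t)) = 0" if "gcd c k dvd q" for q s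
    using periodic_sum_mult[of h "gcd c k", OF h_g, where q = "q div gcd c k" and s = s] h_sum that
    by simp
  have h_k: "h (r + k) = h r" for r
    by (rule periodic_dvd[of h "gcd c k", OF h_g]) simp
  have top: "lag_sum k y m = 0" if "n \<le> m" "m < n + k" for m
  proof -
    define s where "s = m - n"
    have "s < k" "m = (c - 1) * Suc k + 1 + s" using that unfolding s_def n_def by auto
    then have "lag_sum k y m = (\<Sum>t<c. h (s + t))"
      using lag_sum_last_window[where h = h and y = y, OF assms(1) \<open>s < k\<close> h_k]
      unfolding y_def by simp
    also have "\<dots> = 0" by (rule windows) simp
    finally show ?thesis .
  qed
  have f_lag_sum: "f j = lag_sum k y j" if "j < n + k" for j
    using top[of j] that unfolding f_def by simp
  have lag_diff_f: "lag_diff k f m = y m" if "m < n + k" for m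
  proof -
    have "lag_diff k f m = lag_diff k (lag_sum k y) m"
      unfolding lag_diff_def using f_lag_sum that by simp
    then show ?thesis by (simp add: lag_diff_lag_sum)
  qed
  have "(\<Sum>j\<in>{1..k}. lag_diff k f j) = (\<Sum>j\<in>{1..k}. h (j - 1))"
    using lag_diff_f unfolding y_def n_def by (intro sum.cong refl) auto
  also have "\<dots> = (\<Sum>t<k. h t)"
    by (rule sum.reindex_bij_witness[of _ Suc "\<lambda>j. j - 1"]) auto
  also have "\<dots> = 0" using windows[of k 0] by simp
  finally have first: "(\<Sum>j\<in>{1..k}. lag_diff k f j) = 0" .
  have periodic: "lag_diff k f (m + k) = lag_diff k f m" if "1 \<le> m" "m < n" for m
    using that lag_diff_f[of m] lag_diff_f[of "m + k"] h_k[of "m - 1"] unfolding y_def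
    by (simp add: add.commute)
  have "\<forall>i<n. toep_row k f i = 0"
    using toep_rows_eq_0_iff[of n k f] first periodic unfolding n_def by auto
  then show ?thesis unfolding toep_null_def f_def by simp
qed

lemma toep_null_with_initial_values:
  fixes v :: "nat \<Rightarrow> 'a::ring_1"
  assumes "0 < c" and "0 < k"
  shows "\<exists>f. toep_null ((c - 1) * Suc k + 1) k f \<and> (\<forall>p<gcd c k. f p = v p)"
proof -
  define g where "g = gcd c k"
  \<comment> \<open>the last value of the period is forced by the zero period sum\<close>
  define w where "w p = (if p < g - 1 then v (Suc p) else - (\<Sum>q<g - 1. v (Suc q)))" for p
  define h where "h r = w (r mod g)" for r
  define n where "n = (c - 1) * Suc k + 1"
  define y where "y m = (if m = 0 then v 0 else h (m - 1))" for m
  have "0 < g" "g \<le> k" "g \<le> c" using assms unfolding g_def by (simp_all add: gcd_le1_nat gcd_le2_nat)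
  have h_g: "h (r + gcd c k) = h r" for r unfolding h_def g_def by simp
  have "(\<Sum>t<g. h t) = (\<Sum>t<g. w t)" unfolding h_def by simp
  also have "\<dots> = (\<Sum>t<g - 1. w t) + w (g - 1)"
    using \<open>0 < g\<close> by (metis Suc_pred' sum.lessThan_Suc)
  also have "\<dots> = 0" unfolding w_def by simp
  finally have "(\<Sum>t<gcd c k. h t) = 0" unfolding g_def .
  from toep_null_truncated_lag_sum[OF assms h_g this, of "v 0", folded n_def]
  have null: "toep_null n k (\<lambda>j. if j < n then lag_sum k y j else 0)"
    unfolding y_def .
  have "(if p < n then lag_sum k y p else 0) = v p" if "p < g" for p
  proof -
    have "p < n" "p < Suc k" using that \<open>g \<le> c\<close> \<open>g \<le> k\<close> assms unfolding n_def by auto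
    then show ?thesis using that unfolding g_def y_def h_def w_def
      by (subst lag_sum.simps) (auto simp: g_def)
  qed
  then show ?thesis using null unfolding n_def g_def by blast
qed

section \<open>Kernel dimension from a unit-vector prefix\<close>

lemma inj_on_unit_prefix:
  fixes V :: "nat \<Rightarrow> 'a::zero_neq_one vec"
  assumes "\<And>j p. j < g \<Longrightarrow> p < g \<Longrightarrow> V j $ p = (if p = j then 1 else 0)"
  shows "inj_on V {..<g}"
proof (rule inj_onI)
  fix i j assume "i \<in> {..<g}" "j \<in> {..<g}" "V i = V j"
  then show "i = j" using assms[of i i] assms[of j i] by (auto split: if_splits)
qed

context kernel
begin

lemma lin_indpt_unit_prefix:
  assumes "g \<le> nc" and V_ker: "\<And>j. j < g \<Longrightarrow> V j \<in> mat_kernel A"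
    and V_unit: "\<And>j p. j < g \<Longrightarrow> p < g \<Longrightarrow> V j $ p = (if p = j then 1 else 0)"
  shows "lin_indpt (V ` {..<g})"
proof
  assume "lin_dep (V ` {..<g})"
  then obtain U a v where U: "finite U" "U \<subseteq> V ` {..<g}" and lc: "lincomb a U = 0\<^sub>v nc"
    and "v \<in> U" and "a v \<noteq> 0"
    unfolding Ker.lin_dep_def by auto
  then obtain j where j: "j < g" "v = V j" by auto
  have "U \<subseteq> mat_kernel A" using U V_ker by auto
  have "0 = lincomb a U $ j" using lc j assms(1) by simp
  also have "\<dots> = (\<Sum>u\<in>U. a u * u $ j)"
    by (rule lincomb_index) (use j assms(1) \<open>U \<subseteq> mat_kernel A\<close> in auto)
  also have "\<dots> = (\<Sum>u\<in>U. if u = v then a u else 0)"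
  proof (rule sum.cong[OF refl])
    fix u assume "u \<in> U"
    then obtain i where "i < g" "u = V i" using U by auto
    then show "a u * u $ j = (if u = v then a u else 0)"
      using V_unit[of i j] V_unit[of j j] j by auto
  qed
  also have "\<dots> = a v" using U(1) \<open>v \<in> U\<close> by simp
  finally show False using \<open>a v \<noteq> 0\<close> by simp
qed

lemma lincomb_unit_prefix_nth:
  assumes "g \<le> nc" and V_ker: "\<And>j. j < g \<Longrightarrow> V j \<in> mat_kernel A"
    and V_unit: "\<And>j p. j < g \<Longrightarrow> p < g \<Longrightarrow> V j $ p = (if p = j then 1 else 0)"
    and "p < g"
  shows "lincomb a (V ` {..<g}) $ p = a (V p)"
proof -
  have "lincomb a (V ` {..<g}) $ p = (\<Sum>u\<in>V ` {..<g}. a u * u $ p)"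
    by (rule lincomb_index) (use assms in auto)
  also have "\<dots> = (\<Sum>j<g. a (V j) * V j $ p)"
    using V_unit by (intro sum.reindex[OF inj_on_unit_prefix, unfolded comp_def])
  also have "\<dots> = a (V p)"
    using \<open>p < g\<close> by (simp add: V_unit if_distrib cong: if_cong)
  finally show ?thesis .
qed

lemma span_unit_prefix:
  assumes "g \<le> nc" and V_ker: "\<And>j. j < g \<Longrightarrow> V j \<in> mat_kernel A"
    and V_unit: "\<And>j p. j < g \<Longrightarrow> p < g \<Longrightarrow> V j $ p = (if p = j then 1 else 0)"
    and determined: "\<And>x. x \<in> mat_kernel A \<Longrightarrow> \<forall>p<g. x $ p = 0 \<Longrightarrow> x = 0\<^sub>v nc"
  shows "span (V ` {..<g}) = mat_kernel A"
proof
  have V_ker': "V ` {..<g} \<subseteq> mat_kernel A" using V_ker by auto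
  then show "span (V ` {..<g}) \<subseteq> mat_kernel A" by (rule Ker.span_is_subset2)
  show "mat_kernel A \<subseteq> span (V ` {..<g})"
  proof
    fix x assume x: "x \<in> mat_kernel A"
    define a where "a u = (\<Sum>p<g. x $ p * u $ p)" for u
    define L where "L = lincomb a (V ` {..<g})"
    have L: "L \<in> mat_kernel A" unfolding L_def using V_ker' by (intro Ker.lincomb_closed) auto
    have L_x: "L $ p = x $ p" if "p < g" for p
    proof -
      have "L $ p = a (V p)"
        unfolding L_def by (rule lincomb_unit_prefix_nth[OF assms(1) V_ker V_unit that])
      also have "\<dots> = x $ p"
        using that by (simp add: a_def V_unit if_distrib cong: if_cong)
      finally show ?thesis .
    qed
    have "x \<in> carrier_vec nc" "L \<in> carrier_vec nc"
      using x L mat_kernelD[OF A] by auto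
    have "x - L \<in> mat_kernel A"
      using mat_kernelD[OF A x] mat_kernelD[OF A L]
      by (intro mat_kernelI[OF A]) (auto simp: mult_minus_distrib_mat_vec[OF A])
    moreover have "\<forall>p<g. (x - L) $ p = 0"
      using L_x assms(1) \<open>L \<in> carrier_vec nc\<close> by auto
    ultimately have "x - L = 0\<^sub>v nc" by (rule determined)
    have "x = L"
    proof (rule eq_vecI)
      fix i assume "i < dim_vec L"
      then have "(x - L) $ i = 0" using \<open>x - L = 0\<^sub>v nc\<close> \<open>L \<in> carrier_vec nc\<close> by simp
      then show "x $ i = L $ i" using \<open>i < dim_vec L\<close> by simp
    qed (use \<open>x \<in> carrier_vec nc\<close> \<open>L \<in> carrier_vec nc\<close> in simp)
    then show "x \<in> span (V ` {..<g})" unfolding L_def Ker.span_def by blast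
  qed
qed

end

lemma kernel_dim_eq_first_coordinates:
  fixes M :: "'a::field mat"
  assumes M: "M \<in> carrier_mat nr nc" and "g \<le> nc"
    and units: "\<And>j. j < g \<Longrightarrow> \<exists>x\<in>mat_kernel M. \<forall>p<g. x $ p = (if p = j then 1 else 0)"
    and determined: "\<And>x. x \<in> mat_kernel M \<Longrightarrow> \<forall>p<g. x $ p = 0 \<Longrightarrow> x = 0\<^sub>v nc"
  shows "kernel_dim M = g"
proof -
  interpret kernel nr nc M by (rule kernel.intro) (rule M)
  obtain V where V_ker: "\<And>j. j < g \<Longrightarrow> V j \<in> mat_kernel M"
    and V_unit: "\<And>j p. j < g \<Longrightarrow> p < g \<Longrightarrow> V j $ p = (if p = j then 1 else 0)"
    using units by metis
  have inj: "inj_on V {..<g}" using V_unit by (rule inj_on_unit_prefix)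
  have "basis (V ` {..<g})"
    unfolding Ker.basis_def
  proof (intro conjI)
    show "lin_indpt (V ` {..<g})" by (rule lin_indpt_unit_prefix[OF assms(2) V_ker V_unit])
    show "span (V ` {..<g}) = mat_kernel M"
      by (rule span_unit_prefix[OF assms(2) V_ker V_unit determined])
    show "V ` {..<g} \<subseteq> mat_kernel M" using V_ker by auto
  qed
  then have "dim = card (V ` {..<g})" by (intro Ker.dim_basis) auto
  then show ?thesis using inj by (simp add: card_image)
qed

section \<open>The nullity of A(n,k)\<close>

lemma toepA_carrier: "toepA n k \<in> carrier_mat n n"
  unfolding toepA_def by simp

lemma toepA_mult_vec_nth:
  assumes f: "\<forall>j\<ge>n. f j = 0" and i: "i < n"
  shows "(toepA n k *\<^sub>v vec n f) $ i = toep_row k f i"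
proof -
  define e where "e j = (if i < j \<and> j - i \<le> k then 1 else if j < i \<and> i - j \<le> k then -1 else 0 :: real)"
    for j
  define N where "N = n + i + k + 1"
  have "(toepA n k *\<^sub>v vec n f) $ i = (\<Sum>j\<in>{0..<n}. e j * f j)"
    unfolding toepA_def e_def using i by (simp add: scalar_prod_def)
  also have "\<dots> = (\<Sum>j\<in>{0..<N}. e j * f j)"
    by (rule sum.mono_neutral_left) (use f in \<open>auto simp: N_def\<close>)
  also have "\<dots> = (\<Sum>j\<in>{0..<N}. (if j \<in> {Suc i..<Suc i + k} then f j else 0)
                  - (if j \<in> {i - k..<i} then f j else 0))"
    by (intro sum.cong refl) (auto simp: e_def)
  also have "\<dots> = (\<Sum>j\<in>{0..<N} \<inter> {Suc i..<Suc i + k}. f j) - (\<Sum>j\<in>{0..<N} \<inter> {i - k..<i}. f j)"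
    by (simp only: sum_subtractf sum.inter_restrict[OF finite_atLeastLessThan])
  also have "{0..<N} \<inter> {Suc i..<Suc i + k} = {Suc i..<Suc i + k}" unfolding N_def by auto
  also have "{0..<N} \<inter> {i - k..<i} = {i - k..<i}" unfolding N_def by auto
  finally show ?thesis unfolding toep_row_def .
qed

lemma vec_in_kernel_toepA_iff:
  assumes "\<forall>j\<ge>n. f j = 0"
  shows "vec n f \<in> mat_kernel (toepA n k) \<longleftrightarrow> toep_null n k f"
proof -
  have "vec n f \<in> mat_kernel (toepA n k) \<longleftrightarrow> toepA n k *\<^sub>v vec n f = 0\<^sub>v n"
    unfolding mat_kernel[OF toepA_carrier] by (simp only: mem_Collect_eq vec_carrier simp_thms)
  also have "\<dots> \<longleftrightarrow> (\<forall>i<n. (toepA n k *\<^sub>v vec n f) $ i = 0)"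
  proof
    assume z: "toepA n k *\<^sub>v vec n f = 0\<^sub>v n"
    show "\<forall>i<n. (toepA n k *\<^sub>v vec n f) $ i = 0"
    proof (intro allI impI)
      fix i assume "i < n"
      then show "(toepA n k *\<^sub>v vec n f) $ i = 0" unfolding z by (rule index_zero_vec(1))
    qed
  next
    assume "\<forall>i<n. (toepA n k *\<^sub>v vec n f) $ i = 0"
    moreover have "dim_row (toepA n k) = n" using toepA_carrier by (rule carrier_matD)
    ultimately show "toepA n k *\<^sub>v vec n f = 0\<^sub>v n"
      by (intro eq_vecI) (simp_all only: index_zero_vec dim_mult_mat_vec)
  qed
  also have "\<dots> \<longleftrightarrow> (\<forall>i<n. toep_row k f i = 0)"
    using toepA_mult_vec_nth[OF assms, of _ k] by simp
  also have "\<dots> \<longleftrightarrow> toep_null n k f"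
    using assms unfolding toep_null_def by blast
  finally show ?thesis .
qed

theorem kernel_dim_toepA:
  assumes "0 < c" and "0 < k"
  shows "kernel_dim (toepA ((c - 1) * Suc k + 1) k) = gcd c k"
proof -
  define n where "n = (c - 1) * Suc k + 1"
  have "gcd c k \<le> c" using assms(1) by simp
  also have "c \<le> n" using assms(1) unfolding n_def by (cases c) auto
  finally have "gcd c k \<le> n" .
  show ?thesis unfolding n_def[symmetric]
  proof (rule kernel_dim_eq_first_coordinates[OF toepA_carrier \<open>gcd c k \<le> n\<close>])
    fix j
    obtain f :: "nat \<Rightarrow> real"
      where f: "toep_null n k f" and f_init: "\<forall>p<gcd c k. f p = (if p = j then 1 else 0)"
      using toep_null_with_initial_values[OF assms, of "\<lambda>p. if p = j then 1 else 0"]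
      unfolding n_def[symmetric] by blast
    have "vec n f \<in> mat_kernel (toepA n k)"
      using f vec_in_kernel_toepA_iff[of n f k] unfolding toep_null_def by simp
    then show "\<exists>x\<in>mat_kernel (toepA n k). \<forall>p<gcd c k. x $ p = (if p = j then 1 else 0)"
      using f_init \<open>gcd c k \<le> n\<close> by (intro bexI[of _ "vec n f"]) auto
  next
    fix x assume x: "x \<in> mat_kernel (toepA n k)" and x_init: "\<forall>p<gcd c k. x $ p = 0"
    define f where "f j = (if j < n then x $ j else 0)" for j
    have "x \<in> carrier_vec n" using mat_kernelD(1)[OF toepA_carrier x] .
    then have x_f: "x = vec n f" unfolding f_def by (intro eq_vecI) auto
    then have "toep_null n k f"
      using x vec_in_kernel_toepA_iff[of n f k] unfolding f_def by simp
    moreover have "f p = 0" if "p < gcd c k" for p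
      using that x_init \<open>gcd c k \<le> n\<close> unfolding f_def by simp
    ultimately have "f j = 0" for j
      using toep_null_eq_0[OF assms, of f j] unfolding n_def by simp
    then have "f = (\<lambda>_. 0)" by (simp add: fun_eq_iff)
    then show "x = 0\<^sub>v n" unfolding x_f zero_vec_def by simp
  qed
qed

theorem theorem8p8:
  fixes c k :: nat
  assumes "1 < c" and "c < k"
  shows "nullityN (c * k + c - k) k = gcd c k"
proof -
  have "c * k + c - k = (c - 1) * Suc k + 1"
    using assms(1) by (cases c) (auto simp: algebra_simps)
  then show ?thesis
    unfolding nullityN_def using kernel_dim_toepA[of c k] assms by simp
qed

end
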